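(* Let $F,G:\mathbb{R}\to\mathbb{C}$ be real-analytic functions such that $|F(x)|=|G(x)|$ and $|F'(x)|=|G'(x)|$ for every $x\in\mathbb{R}$. Then there exists $c\in\mathbb{C}$ with $|c|=1$ such that either $G(x)=cF(x)$ for all $x\in\mathbb{R}$, or $G(x)=c\overline{F(x)}$ for all $x\in\mathbb{R}$. *)

theory Defs
  imports "HOL-Analysis.Analysis"
begin

definition real_analytic :: "(real \<Rightarrow> complex) \<Rightarrow> bool" where
  "real_analytic f \<longleftrightarrow>
     (\<forall>x0. \<exists>a :: nat \<Rightarrow> complex. \<exists>r > 0.
        \<forall>x. \<bar>x - x0\<bar> < r \<longrightarrow> (\<lambda>n. a n * complex_of_real ((x - x0) ^ n)) sums f x)"

end

theory Submission
  imports Defs "HOL-Complex_Analysis.Complex_Analysis"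
begin

text \<open>Put \<open>p = F' \<cdot> conj F\<close> and \<open>q = G' \<cdot> conj G\<close>. Both \<open>p + conj p\<close> and \<open>q + conj q\<close> are the
derivative of \<open>|F|\<^sup>2 = |G|\<^sup>2\<close>, and \<open>|p| = |q|\<close>, so \<open>(q - p)(q - conj p) = 0\<close> pointwise.
Real-analytic functions on the line form an integral domain, hence \<open>q = p\<close> or \<open>q = conj p\<close>
identically; in the second case we replace \<open>G\<close> by \<open>conj G\<close>. Now \<open>q = p\<close> together with
\<open>|F| = |G|\<close> makes the Wronskian \<open>G' F - G F'\<close> vanish, so \<open>G/F\<close> is a constant \<open>c\<close> near a
point where \<open>F \<noteq> 0\<close>, and \<open>G = c F\<close> everywhere by the identity theorem.
Real-analyticity is handled through local holomorphic extensions, so that the closure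
properties and the identity theorem are inherited from complex analysis.\<close>

lemma complex_wronskian_eq_0:
  fixes a b a' b' :: complex
  assumes "a \<noteq> 0" and "norm a = norm b" and "b' * cnj b = a' * cnj a"
  shows "b' * a = b * a'"
proof -
  have "b \<noteq> 0" and "b * cnj b = a * cnj a"
    using assms(1,2) by (auto simp flip: complex_norm_square)
  then have "cnj b * (b' * a - b * a') = 0"
    using assms(3) by (simp add: algebra_simps)
  with \<open>b \<noteq> 0\<close> show ?thesis by simp
qed

lemma complex_same_re_norm_mult_eq_0:
  fixes w z :: complex
  assumes "w + cnj w = z + cnj z" and "norm w = norm z"
  shows "(z - w) * (z - cnj w) = 0"
proof -
  have "w * cnj w = z * cnj z" using assms(2) by (simp flip: complex_norm_square)
  then have "(z - w) * (z - cnj w) = z * z - z * (w + cnj w) + z * cnj z"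
    by (simp add: algebra_simps)
  also have "\<dots> = 0" by (simp add: assms(1) algebra_simps)
  finally show ?thesis .
qed

lemma has_vector_derivative_mult_cnj:
  fixes f :: "real \<Rightarrow> complex"
  assumes "(f has_vector_derivative f') (at x)"
  shows "((\<lambda>x. f x * cnj (f x)) has_vector_derivative f' * cnj (f x) + cnj (f' * cnj (f x))) (at x)"
  using has_vector_derivative_mult[OF assms has_vector_derivative_cnj[OF assms]]
  by (simp add: algebra_simps)

lemma has_vector_derivative_divide_eq_0:
  fixes F G :: "real \<Rightarrow> complex"
  assumes F: "(F has_vector_derivative F') (at y)" and G: "(G has_vector_derivative G') (at y)"
    and nonzero: "F y \<noteq> 0" and wronskian: "G' * F y = G y * F'"
  shows "((\<lambda>y. G y / F y) has_vector_derivative 0) (at y)"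
proof -
  have "((\<lambda>y. G y * inverse (F y)) has_vector_derivative
      G' * inverse (F y) - G y * (F' * (inverse (F y) * inverse (F y)))) (at y)"
    using has_vector_derivative_mult[OF G field_vector_diff_chain_at[OF F DERIV_inverse[OF nonzero]]]
    by (simp add: o_def)
  also have "G' * inverse (F y) - G y * (F' * (inverse (F y) * inverse (F y)))
      = (G' * F y - G y * F') / F y ^ 2"
    using nonzero by (simp add: field_simps power2_eq_square)
  finally show ?thesis by (simp add: wronskian divide_inverse)
qed

definition real_holomorphic :: "(real \<Rightarrow> complex) \<Rightarrow> bool" where
  "real_holomorphic g \<longleftrightarrow> (\<forall>x0. \<exists>r>0. \<exists>h. h holomorphic_on ball (complex_of_real x0) r \<and>
       (\<forall>x\<in>ball x0 r. g x = h (of_real x)))"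

lemma real_analytic_imp_real_holomorphic:
  assumes "real_analytic f" shows "real_holomorphic f"
  unfolding real_holomorphic_def
proof
  fix x0
  obtain a r where r: "r > 0" and sums: "\<And>x. \<bar>x - x0\<bar> < r \<Longrightarrow>
      (\<lambda>n. a n * complex_of_real ((x - x0) ^ n)) sums f x"
    using assms unfolding real_analytic_def by blast
  define p where "p = (\<lambda>w::complex. \<Sum>n. a n * w ^ n)"
  have radius: "conv_radius a \<ge> ereal r"
  proof (rule conv_radius_geI_ex')
    fix \<rho> :: real assume "0 < \<rho>" "ereal \<rho> < ereal r"
    then have "\<bar>(x0 + \<rho>) - x0\<bar> < r" by simp
    from sums_summable[OF sums[OF this]]
    show "summable (\<lambda>n. a n * of_real \<rho> ^ n)" by (simp add: of_real_power)
  qed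
  have "p holomorphic_on ball 0 r"
  proof (subst holomorphic_on_open, simp, intro ballI exI)
    fix w :: complex assume "w \<in> ball 0 r"
    then have "ereal (norm w) < ereal r" by simp
    then have "ereal (norm w) < conv_radius a"
      using radius by (rule order_less_le_trans)
    then show "(p has_field_derivative (\<Sum>n. diffs a n * w ^ n)) (at w)"
      unfolding p_def by (rule has_field_derivative_powser)
  qed
  then have "(\<lambda>z. p (z - complex_of_real x0)) holomorphic_on ball (complex_of_real x0) r"
    by (rule holomorphic_on_compose_gen[unfolded o_def, rotated])
       (auto intro!: holomorphic_intros simp: dist_norm norm_minus_commute)
  moreover have "f x = p (of_real x - of_real x0)" if "x \<in> ball x0 r" for x
    using sums_unique[OF sums] that by (simp add: p_def dist_real_def of_real_power)
  ultimately show "\<exists>r>0. \<exists>h. h holomorphic_on ball (complex_of_real x0) r \<and>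
       (\<forall>x\<in>ball x0 r. f x = h (of_real x))" using r by blast
qed

lemma real_holomorphic_binop:
  assumes "real_holomorphic f" "real_holomorphic g"
    and holo: "\<And>S h1 h2. h1 holomorphic_on S \<Longrightarrow> h2 holomorphic_on S \<Longrightarrow>
                 (\<lambda>z. op (h1 z) (h2 z)) holomorphic_on S"
  shows "real_holomorphic (\<lambda>x. op (f x) (g x))"
  unfolding real_holomorphic_def
proof
  fix x0
  obtain r1 h1 where r1: "r1 > 0" "h1 holomorphic_on ball (complex_of_real x0) r1"
    "\<forall>x\<in>ball x0 r1. f x = h1 (of_real x)" using assms(1) unfolding real_holomorphic_def by blast
  obtain r2 h2 where r2: "r2 > 0" "h2 holomorphic_on ball (complex_of_real x0) r2"
    "\<forall>x\<in>ball x0 r2. g x = h2 (of_real x)" using assms(2) unfolding real_holomorphic_def by blast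
  have "(\<lambda>z. op (h1 z) (h2 z)) holomorphic_on ball (complex_of_real x0) (min r1 r2)"
    by (intro holo holomorphic_on_subset[OF r1(2)] holomorphic_on_subset[OF r2(2)]) auto
  then show "\<exists>r>0. \<exists>h. h holomorphic_on ball (complex_of_real x0) r \<and>
       (\<forall>x\<in>ball x0 r. op (f x) (g x) = h (of_real x))"
    using r1 r2 by (intro exI[of _ "min r1 r2"] conjI exI[of _ "\<lambda>z. op (h1 z) (h2 z)"]) auto
qed

lemma real_holomorphic_diff: "real_holomorphic f \<Longrightarrow> real_holomorphic g \<Longrightarrow> real_holomorphic (\<lambda>x. f x - g x)"
  by (rule real_holomorphic_binop) (auto intro: holomorphic_intros)

lemma real_holomorphic_mult: "real_holomorphic f \<Longrightarrow> real_holomorphic g \<Longrightarrow> real_holomorphic (\<lambda>x. f x * g x)"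
  by (rule real_holomorphic_binop) (auto intro: holomorphic_intros)

lemma real_holomorphic_const: "real_holomorphic (\<lambda>x. c)"
  unfolding real_holomorphic_def
  by (intro allI exI[of _ 1] conjI exI[of _ "\<lambda>z. c"]) (auto intro: holomorphic_intros)

lemma real_holomorphic_cnj:
  assumes "real_holomorphic f" shows "real_holomorphic (\<lambda>x. cnj (f x))"
  unfolding real_holomorphic_def
proof
  fix x0
  obtain r h where r: "r > 0" "h holomorphic_on ball (complex_of_real x0) r"
    "\<forall>x\<in>ball x0 r. f x = h (of_real x)" using assms unfolding real_holomorphic_def by blast
  have "cnj ` ball (complex_of_real x0) r \<subseteq> ball (complex_of_real x0) r"
    by (auto simp: dist_norm, metis complex_cnj_complex_of_real complex_mod_cnj complex_cnj_diff)
  then have "cnj \<circ> h \<circ> cnj holomorphic_on ball (complex_of_real x0) r"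
    by (intro holomorphic_on_compose_cnj_cnj holomorphic_on_subset[OF r(2)]) auto
  then show "\<exists>r>0. \<exists>h. h holomorphic_on ball (complex_of_real x0) r \<and>
       (\<forall>x\<in>ball x0 r. cnj (f x) = h (of_real x))"
    using r by (intro exI[of _ r] conjI exI[of _ "cnj \<circ> h \<circ> cnj"]) auto
qed

lemma has_vector_derivative_holomorphic_extension:
  assumes h: "h holomorphic_on ball (complex_of_real x0) r"
    and ext: "\<forall>y\<in>ball x0 r. f y = h (of_real y)" and x: "x \<in> ball x0 r"
  shows "(f has_vector_derivative deriv h (of_real x)) (at x)"
proof -
  have "h field_differentiable at (of_real x)"
    using h x by (intro holomorphic_on_imp_differentiable_at) auto
  then have "((\<lambda>y. h (of_real y)) has_vector_derivative deriv h (of_real x)) (at x)"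
    by (intro has_vector_derivative_real_field) (simp add: DERIV_deriv_iff_field_differentiable)
  then show ?thesis
    by (rule has_vector_derivative_transform_within_open[where S = "ball x0 r"]) (use x ext in auto)
qed

lemma real_holomorphic_has_vector_derivative:
  assumes "real_holomorphic f" shows "(f has_vector_derivative vector_derivative f (at x)) (at x)"
proof -
  obtain r h where "r > 0" "h holomorphic_on ball (complex_of_real x) r"
    "\<forall>y\<in>ball x r. f y = h (of_real y)" using assms unfolding real_holomorphic_def by blast
  then have "f differentiable at x"
    by (meson centre_in_ball differentiableI_vector has_vector_derivative_holomorphic_extension)
  then show ?thesis by (simp add: vector_derivative_works)
qed

lemma real_holomorphic_differentiable: "real_holomorphic f \<Longrightarrow> f differentiable at x"
  using real_holomorphic_has_vector_derivative differentiableI_vector by blast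

lemma real_holomorphic_continuous_on:
  assumes "real_holomorphic f" shows "continuous_on S f"
  using real_holomorphic_differentiable[OF assms]
  by (meson continuous_at_imp_continuous_on differentiable_imp_continuous_within)

lemma real_holomorphic_vector_derivative:
  assumes "real_holomorphic f" shows "real_holomorphic (\<lambda>x. vector_derivative f (at x))"
  unfolding real_holomorphic_def
proof
  fix x0
  obtain r h where r: "r > 0" "h holomorphic_on ball (complex_of_real x0) r"
    "\<forall>x\<in>ball x0 r. f x = h (of_real x)" using assms unfolding real_holomorphic_def by blast
  have "deriv h holomorphic_on ball (complex_of_real x0) r"
    using r(2) by (rule holomorphic_deriv) simp
  moreover have "\<forall>x\<in>ball x0 r. vector_derivative f (at x) = deriv h (of_real x)"
    using has_vector_derivative_holomorphic_extension[OF r(2,3)] vector_derivative_at by blast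
  ultimately show "\<exists>r>0. \<exists>h. h holomorphic_on ball (complex_of_real x0) r \<and>
       (\<forall>x\<in>ball x0 r. vector_derivative f (at x) = h (of_real x))"
    using r(1) by blast
qed

text \<open>The interior of the zero set is closed: near a limit point of it, the holomorphic
extension vanishes by analytic continuation.\<close>

lemma real_holomorphic_eq_0:
  assumes g: "real_holomorphic g" and "open S" "S \<noteq> {}" and zero: "\<forall>y\<in>S. g y = 0"
  shows "g x = 0"
proof -
  define Z where "Z = interior {y. g y = 0}"
  have "S \<subseteq> Z" unfolding Z_def using zero by (intro interior_maximal \<open>open S\<close>) auto
  have "closed Z"
    unfolding closed_limpt
  proof (intro allI impI)
    fix x assume lim: "x islimpt Z"
    obtain r h where r: "r > 0" and h: "h holomorphic_on ball (complex_of_real x) r"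
      and ext: "\<forall>y\<in>ball x r. g y = h (of_real y)" using g unfolding real_holomorphic_def by blast
    define U where "U = complex_of_real ` (Z \<inter> ball x r)"
    have limpt: "complex_of_real x islimpt U"
      unfolding islimpt_approachable
    proof (intro allI impI)
      fix e :: real assume "e > 0"
      then obtain s where "s \<in> Z" "s \<noteq> x" "dist s x < min e r"
        using lim r unfolding islimpt_approachable by (metis min_less_iff_conj)
      then show "\<exists>w\<in>U. w \<noteq> complex_of_real x \<and> dist w (complex_of_real x) < e"
        by (intro bexI[of _ "of_real s"]) (auto simp: U_def dist_commute)
    qed
    have vanish: "h w = 0" if "w \<in> U" for w
      using that ext interior_subset unfolding U_def Z_def by fastforce
    have "U \<subseteq> ball (complex_of_real x) r" by (auto simp: U_def)
    then have "h (of_real y) = 0" if "y \<in> ball x r" for y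
      using analytic_continuation[OF h open_ball connected_ball _ _ limpt vanish] r that by simp
    then have "ball x r \<subseteq> {y. g y = 0}" using ext by auto
    then show "x \<in> Z" unfolding Z_def using r by (meson centre_in_ball interior_maximal open_ball subsetD)
  qed
  then have "Z = UNIV" using clopen[of Z] \<open>S \<subseteq> Z\<close> \<open>S \<noteq> {}\<close> by (auto simp: Z_def)
  then show ?thesis unfolding Z_def using interior_subset by blast
qed

lemma real_holomorphic_mult_eq_0:
  assumes f: "real_holomorphic f" and g: "real_holomorphic g" and product: "\<And>x. f x * g x = 0"
  shows "(\<forall>x. f x = 0) \<or> (\<forall>x. g x = 0)"
proof (rule disjCI)
  assume "\<not> (\<forall>x. g x = 0)"
  moreover have "open {x. g x \<noteq> 0}"
    by (intro open_Collect_neq real_holomorphic_continuous_on g continuous_on_const)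
  ultimately show "\<forall>x. f x = 0"
    using real_holomorphic_eq_0[OF f, of "{x. g x \<noteq> 0}"] product by auto
qed

lemma real_holomorphic_unimodular_multiple:
  assumes F: "real_holomorphic F" and G: "real_holomorphic G"
    and norm_eq: "\<And>x. norm (F x) = norm (G x)"
    and deriv_eq: "\<And>x. vector_derivative G (at x) * cnj (G x) = vector_derivative F (at x) * cnj (F x)"
  shows "\<exists>c. norm c = 1 \<and> (\<forall>x. G x = c * F x)"
proof (cases "\<forall>x. F x = 0")
  case True
  then have "G x = 1 * F x" for x
    using norm_eq[of x] by simp
  then show ?thesis by (intro exI[of _ 1]) simp
next
  case False
  then obtain x1 where "F x1 \<noteq> 0" by blast
  moreover have "open {x. F x \<noteq> 0}"
    by (intro open_Collect_neq real_holomorphic_continuous_on F continuous_on_const)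
  ultimately obtain e where "e > 0" and "ball x1 e \<subseteq> {x. F x \<noteq> 0}"
    by (force simp: open_contains_ball)
  then have nonzero: "\<And>y. y \<in> ball x1 e \<Longrightarrow> F y \<noteq> 0" by blast
  have "((\<lambda>y. G y / F y) has_vector_derivative 0) (at y within ball x1 e)"
    if y: "y \<in> ball x1 e" for y
    using has_vector_derivative_divide_eq_0[OF real_holomorphic_has_vector_derivative[OF F]
        real_holomorphic_has_vector_derivative[OF G] nonzero[OF y]
        complex_wronskian_eq_0[OF nonzero[OF y] norm_eq deriv_eq]]
    by (rule has_vector_derivative_at_within)
  then obtain c where "\<And>y. y \<in> ball x1 e \<Longrightarrow> G y / F y = c"
    using has_vector_derivative_zero_constant[OF convex_ball] by blast
  then have "\<forall>y\<in>ball x1 e. G y - c * F y = 0"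
    using nonzero by (simp add: divide_eq_eq)
  moreover have "real_holomorphic (\<lambda>y. G y - c * F y)"
    by (intro real_holomorphic_diff real_holomorphic_mult real_holomorphic_const F G)
  ultimately have multiple: "G x = c * F x" for x
    using real_holomorphic_eq_0[of "\<lambda>y. G y - c * F y" "ball x1 e" x] \<open>e > 0\<close> by simp
  then have "norm c = 1"
    using norm_eq[of x1] \<open>F x1 \<noteq> 0\<close> by (simp add: norm_mult)
  with multiple show ?thesis by blast
qed

lemma real_holomorphic_deriv_mult_cnj_cases:
  assumes F: "real_holomorphic F" and G: "real_holomorphic G"
    and norm_eq: "\<And>x. norm (F x) = norm (G x)"
    and deriv_norm_eq: "\<And>x. norm (vector_derivative F (at x)) = norm (vector_derivative G (at x))"
  defines "p \<equiv> \<lambda>x. vector_derivative F (at x) * cnj (F x)"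
    and "q \<equiv> \<lambda>x. vector_derivative G (at x) * cnj (G x)"
  shows "(\<forall>x. q x = p x) \<or> (\<forall>x. q x = cnj (p x))"
proof -
  have same_square: "(\<lambda>x. F x * cnj (F x)) = (\<lambda>x. G x * cnj (G x))"
    using norm_eq by (simp flip: complex_norm_square)
  have "p x + cnj (p x) = q x + cnj (q x)" for x
  proof (rule vector_derivative_unique_at)
    show "((\<lambda>x. F x * cnj (F x)) has_vector_derivative p x + cnj (p x)) (at x)"
      unfolding p_def by (intro has_vector_derivative_mult_cnj real_holomorphic_has_vector_derivative F)
    show "((\<lambda>x. F x * cnj (F x)) has_vector_derivative q x + cnj (q x)) (at x)"
      unfolding same_square q_def
      by (intro has_vector_derivative_mult_cnj real_holomorphic_has_vector_derivative G)
  qed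
  moreover have "norm (p x) = norm (q x)" for x
    using norm_eq deriv_norm_eq by (simp add: p_def q_def norm_mult)
  ultimately have product: "(q x - p x) * (q x - cnj (p x)) = 0" for x
    by (rule complex_same_re_norm_mult_eq_0)
  have "real_holomorphic p" "real_holomorphic q"
    unfolding p_def q_def
    by (intro real_holomorphic_mult real_holomorphic_vector_derivative real_holomorphic_cnj F G)+
  then have "(\<forall>x. q x - p x = 0) \<or> (\<forall>x. q x - cnj (p x) = 0)"
    by (intro real_holomorphic_mult_eq_0 real_holomorphic_diff real_holomorphic_cnj product)
  then show ?thesis by simp
qed

theorem mainTheorem5:
  fixes F G :: "real \<Rightarrow> complex"
  assumes "real_analytic F" and "real_analytic G"
    and "\<And>x. norm (F x) = norm (G x)"
    and "\<And>x. norm (vector_derivative F (at x)) = norm (vector_derivative G (at x))"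
  shows "\<exists>c :: complex. norm c = 1 \<and>
           ((\<forall>x. G x = c * F x) \<or> (\<forall>x. G x = c * cnj (F x)))"
proof -
  have F: "real_holomorphic F" and G: "real_holomorphic G"
    using assms(1,2) by (simp_all add: real_analytic_imp_real_holomorphic)
  consider "\<forall>x. vector_derivative G (at x) * cnj (G x) = vector_derivative F (at x) * cnj (F x)"
    | "\<forall>x. vector_derivative G (at x) * cnj (G x) = cnj (vector_derivative F (at x) * cnj (F x))"
    using real_holomorphic_deriv_mult_cnj_cases[OF F G assms(3,4)] by blast
  then show ?thesis
  proof cases
    case 1
    then show ?thesis using real_holomorphic_unimodular_multiple[OF F G assms(3)] by auto
  next
    case 2
    have "vector_derivative (\<lambda>x. cnj (G x)) (at x) * cnj (cnj (G x))
        = vector_derivative F (at x) * cnj (F x)" for x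
      using 2 vector_derivative_cnj[OF real_holomorphic_differentiable[OF G]]
      by (metis complex_cnj_cnj complex_cnj_mult)
    then obtain c where "norm c = 1" and "\<forall>x. cnj (G x) = c * F x"
      using real_holomorphic_unimodular_multiple[OF F real_holomorphic_cnj[OF G]] assms(3) by auto
    then show ?thesis
      by (intro exI[of _ "cnj c"]) (metis complex_cnj_cnj complex_cnj_mult complex_mod_cnj)
  qed
qed

end
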